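(* Let $a_1,\dots,a_n\in\mathbb{Z}_{\ge0}$ with $a_1+\cdots+a_n=A$, let $t_1,\dots,t_n\in\mathbb{Z}_{\ge0}$ with $t_1+\cdots+t_n=T$, let $B\in\mathbb{Z}$, and let $p_1,\dots,p_n\in\mathbb{Z}/2$. Then $$\sum_{\substack{f_1+\cdots+f_n=B\\ f_i\equiv p_i \ (\mathrm{mod}\ 2)}}\ \prod_{i=1}^n\binom{2a_i}{f_i}(f_i)_{t_i}=\sum_{\substack{f_1+\cdots+f_n=2A-B+T\\ f_i\equiv p_i+t_i\ (\mathrm{mod}\ 2)}}\ \prod_{i=1}^n\binom{2a_i}{f_i}(f_i)_{t_i},$$ where both sums run over $(f_1,\dots,f_n)\in\mathbb{Z}^n$.
   Context: $\binom{m}{f}$ is the usual binomial coefficient, zero when $f<0$ or $f>m$. $(f)_t:=f(f-1)\cdots(f-t+1)$ is the falling factorial (Pochhammer symbol), with $(f)_0=1$. *)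

theory Defs
  imports Main
begin

definition binomZ :: "int \<Rightarrow> int \<Rightarrow> int" where
  "binomZ m f = (if 0 \<le> f \<and> f \<le> m then int (nat m choose nat f) else 0)"

definition fallfac :: "int \<Rightarrow> nat \<Rightarrow> int" where
  "fallfac f t = (\<Prod>k<t. f - int k)"

text \<open>Tuples with some
  f_i outside [0, 2 a_i] contribute 0 (binomZ vanishes), so we restrict to that box
  to obtain a finite index set.\<close>
definition idx :: "nat \<Rightarrow> (nat \<Rightarrow> nat) \<Rightarrow> int \<Rightarrow> (nat \<Rightarrow> int) \<Rightarrow> (nat \<Rightarrow> int) set" where
  "idx n a S q = {f. (\<forall>i<n. 0 \<le> f i \<and> f i \<le> 2 * int (a i)) \<and> (\<forall>i\<ge>n. f i = 0)
                     \<and> (\<Sum>i<n. f i) = S \<and> (\<forall>i<n. f i mod 2 = q i mod 2)}"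

end

theory Submission
  imports Defs HOL.Binomial_Plus
begin

text \<open>For 0 \<le> t \<le> f \<le> m one has binom(m,f) (f)_t = t! binom(m,t) binom(m-t,f-t), and the
  product vanishes for all other integers f; hence it is invariant under f \<mapsto> m + t - f.
  With m = 2 a_i, the coordinatewise reflection f_i \<mapsto> 2 a_i + t_i - f_i is therefore a
  weight-preserving involution between the supports of the two sums: it sends the total B to
  2A + T - B and shifts the parity of each f_i by t_i.\<close>

lemma fallfac_of_nat: "fallfac (int f) t = int (fact t * (f choose t))"
  by (simp add: fallfac_def lessThan_atLeast0 int_binomial gbinomial_int_mult_fact)

lemma fallfac_eq_0:
  assumes "0 \<le> f" "f < int t"
  shows "fallfac f t = 0"
proof -
  have "nat f \<in> {..<t}" "f - int (nat f) = 0" using assms by auto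
  then show ?thesis unfolding fallfac_def by (metis finite_lessThan prod_zero)
qed

lemma binomZ_mult_fallfac_of_nat:
  assumes "t \<le> k" "k \<le> m"
  shows "binomZ (int m) (int k) * fallfac (int k) t
       = int (fact t * (m choose t) * ((m - t) choose (k - t)))"
proof -
  have "(m choose k) * (k choose t) = (m choose t) * ((m - t) choose (k - t))"
    using choose_mult assms by blast
  then show ?thesis
    using assms unfolding fallfac_of_nat
    by (simp add: binomZ_def) (metis mult.assoc mult.commute of_nat_mult)
qed

lemma binomZ_mult_fallfac_eq_0:
  assumes "\<not> (int t \<le> f \<and> f \<le> int m)"
  shows "binomZ (int m) f * fallfac f t = 0"
proof (cases "0 \<le> f \<and> f \<le> int m")
  case True
  then have "fallfac f t = 0" using assms by (intro fallfac_eq_0) auto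
  then show ?thesis by simp
qed (auto simp: binomZ_def)

lemma binomZ_mult_fallfac_reflect:
  "binomZ (int m) (int m + int t - f) * fallfac (int m + int t - f) t
     = binomZ (int m) f * fallfac f t"
proof (cases "int t \<le> f \<and> f \<le> int m")
  case True
  then obtain k where f: "f = int k" and k: "t \<le> k" "k \<le> m"
    by (metis nonneg_int_cases of_nat_0_le_iff of_nat_le_iff order_trans)
  have reflected: "int m + int t - f = int (m + t - k)" and t_le: "t \<le> m + t - k"
    and le_m: "m + t - k \<le> m"
    using f k by auto
  have "(m - t) choose (m + t - k - t) = (m - t) choose (k - t)"
    using k binomial_symmetric[of "k - t" "m - t"] by (simp add: diff_diff_eq)
  then show ?thesis
    unfolding reflected binomZ_mult_fallfac_of_nat[OF t_le le_m]
    unfolding f binomZ_mult_fallfac_of_nat[OF k] by simp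
next
  case False
  then have "\<not> (int t \<le> int m + int t - f \<and> int m + int t - f \<le> int m)" by auto
  then show ?thesis using False by (simp add: binomZ_mult_fallfac_eq_0)
qed

lemma finite_idx: "finite (idx n a S q)"
proof (rule finite_subset)
  let ?box = "{f. \<forall>i. (i \<in> {..<n} \<longrightarrow> f i \<in> {0..2 * int (Max (a ` {..<n}))})
                   \<and> (i \<notin> {..<n} \<longrightarrow> f i = 0)}"
  have "a i \<le> Max (a ` {..<n})" if "i < n" for i
    using that by (intro Max_ge) auto
  then have "2 * int (a i) \<le> 2 * int (Max (a ` {..<n}))" if "i < n" for i
    using that by simp
  then show "idx n a S q \<subseteq> ?box"
    unfolding idx_def by (auto intro: order_trans)
  show "finite ?box"
    by (rule finite_set_of_finite_funs) auto
qed

lemma sum_idx_reflect: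
  fixes g :: "nat \<Rightarrow> int \<Rightarrow> int" and c q q' :: "nat \<Rightarrow> int"
  assumes g_reflect: "\<And>i f. i < n \<Longrightarrow> g i (c i - f) = g i f"
    and g_vanish: "\<And>i f. i < n \<Longrightarrow> f < c i - 2 * int (a i) \<Longrightarrow> g i f = 0"
    and c_ge: "\<And>i. i < n \<Longrightarrow> 2 * int (a i) \<le> c i"
    and parity: "\<And>i. i < n \<Longrightarrow> (c i - q i) mod 2 = q' i mod 2"
  shows "(\<Sum>f\<in>idx n a S q. \<Prod>i<n. g i (f i))
       = (\<Sum>f\<in>idx n a ((\<Sum>i<n. c i) - S) q'. \<Prod>i<n. g i (f i))"
proof -
  define h where "h f = (\<Prod>i<n. g i (f i))" for f
  \<comment> \<open>The reflection does not preserve the box of idx, only the part where g does not vanish.\<close>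
  define supp where "supp S q = idx n a S q \<inter> {f. \<forall>i<n. c i - 2 * int (a i) \<le> f i}" for S q
  define reflect where "reflect f = (\<lambda>i. if i < n then c i - f i else 0)" for f
  have sum_supp: "sum h (idx n a S q) = sum h (supp S q)" for S q
  proof (rule sum.mono_neutral_right[OF finite_idx])
    show "\<forall>f\<in>idx n a S q - supp S q. h f = 0"
      unfolding supp_def h_def using g_vanish by (force intro: prod_zero)
  qed (auto simp: supp_def)
  have reflect_supp: "reflect f \<in> supp ((\<Sum>i<n. c i) - S) q2"
    if f: "f \<in> supp S q1" and par: "\<And>i. i < n \<Longrightarrow> (c i - q1 i) mod 2 = q2 i mod 2"
    for f S q1 q2
  proof -
    have "(\<Sum>i<n. reflect f i) = (\<Sum>i<n. c i) - (\<Sum>i<n. f i)"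
      by (simp add: reflect_def sum_subtractf)
    moreover have "(c i - f i) mod 2 = q2 i mod 2" if "i < n" "f i mod 2 = q1 i mod 2" for i
      using par[OF that(1)] that(2) by presburger
    moreover have "f i \<le> c i" if "i < n" for i
      using f c_ge[OF that] that unfolding supp_def idx_def by auto
    ultimately show ?thesis
      using f unfolding supp_def idx_def reflect_def by auto
  qed
  have parity': "(c i - q' i) mod 2 = q i mod 2" if "i < n" for i
    using parity[OF that] by presburger
  have reflect_reflect: "reflect (reflect f) = f" if "f \<in> supp S q" for f S q
    using that unfolding supp_def idx_def reflect_def by (auto simp: fun_eq_iff)
  have h_reflect: "h (reflect f) = h f" for f
    unfolding h_def reflect_def by (simp add: g_reflect)
  have "sum h (supp S q) = sum h (supp ((\<Sum>i<n. c i) - S) q')"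
  proof (rule sum.reindex_bij_witness[where i = reflect and j = reflect])
    fix f assume f: "f \<in> supp S q"
    show "reflect (reflect f) = f" using reflect_reflect[OF f] .
    show "reflect f \<in> supp ((\<Sum>i<n. c i) - S) q'" using reflect_supp[OF f parity] .
    show "h (reflect f) = h f" by (rule h_reflect)
  next
    fix f assume f: "f \<in> supp ((\<Sum>i<n. c i) - S) q'"
    show "reflect (reflect f) = f" using reflect_reflect[OF f] .
    show "reflect f \<in> supp S q" using reflect_supp[OF f parity'] by simp
  qed
  then show ?thesis
    unfolding h_def[symmetric] sum_supp .
qed

theorem lemmaA1:
  fixes n :: nat and a t :: "nat \<Rightarrow> nat" and A T :: nat and B :: int and p :: "nat \<Rightarrow> int"
  assumes "(\<Sum>i<n. a i) = A"
    and "(\<Sum>i<n. t i) = T"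
  shows "(\<Sum>f\<in>idx n a B p. \<Prod>i<n. binomZ (2 * int (a i)) (f i) * fallfac (f i) (t i))
       = (\<Sum>f\<in>idx n a (2 * int A - B + int T) (\<lambda>i. p i + int (t i)).
            \<Prod>i<n. binomZ (2 * int (a i)) (f i) * fallfac (f i) (t i))"
proof -
  define c where "c i = 2 * int (a i) + int (t i)" for i
  have "(\<Sum>i<n. c i) = 2 * (\<Sum>i<n. int (a i)) + (\<Sum>i<n. int (t i))"
    by (simp add: c_def sum.distrib sum_distrib_left)
  then have sum_c: "2 * int A - B + int T = (\<Sum>i<n. c i) - B"
    using assms by (simp flip: of_nat_sum)
  have reflect: "binomZ (2 * int (a i)) (c i - f) * fallfac (c i - f) (t i)
      = binomZ (2 * int (a i)) f * fallfac f (t i)" for i f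
    using binomZ_mult_fallfac_reflect[of "2 * a i" "t i" f] by (simp add: c_def)
  have vanish: "binomZ (2 * int (a i)) f * fallfac f (t i) = 0"
    if "f < c i - 2 * int (a i)" for i f
    using binomZ_mult_fallfac_eq_0[of "t i" f "2 * a i"] that by (simp add: c_def)
  show ?thesis
    unfolding sum_c
  proof (rule sum_idx_reflect[where g = "\<lambda>i f. binomZ (2 * int (a i)) f * fallfac f (t i)"])
    show "(c i - p i) mod 2 = (p i + int (t i)) mod 2" for i
      unfolding c_def by presburger
  qed (simp_all add: reflect vanish, simp add: c_def)
qed

end
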